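(* For each integer $r\ge 1$, let $G_r = (rK_1 \cup (K_1 \nabla (r+1)K_1)) \nabla (rK_1 \cup (K_1 \nabla (r+1)K_1))$, a graph of order $4r+4$. Then $LE(G_r)=LE(K_{4r+4})=8r+6$ (i.e. $G_r$ is $L$-borderenergetic), and $G_r$ and $K_{4r+4}$ have different Laplacian spectra.
   Context: All graphs are finite, simple and undirected. The Laplacian matrix of $G$ is $L(G)=D-A$ ($D$ degree matrix, $A$ adjacency matrix). For a graph $G$ on $n$ vertices with Laplacian eigenvalues $\mu_1,\dots,\mu_n$ and average degree $\overline d = 2|E(G)|/n$, the Laplacian energy is $LE(G)=\sum_{i=1}^n|\mu_i-\overline d|$. One has $LE(K_n)=2n-2$. A graph $G$ on $n$ vertices is $L$-borderenergetic if $LE(G)=LE(K_n)$. $K_m$ is the complete graph on $m$ vertices, $mG$ is the disjoint union of $m$ copies of $G$, $G_1\cup G_2$ is the disjoint union, and the join $G_1\nabla G_2$ is obtained from $G_1\cup G_2$ by adding all edges between a vertex of $G_1$ and a vertex of $G_2$. *)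

theory Defs
  imports "Jordan_Normal_Form.Matrix" "Jordan_Normal_Form.Char_Poly"
          "HOL-Computational_Algebra.Polynomial"
begin

text \<open>A finite simple graph on the vertex set {0..<n}, given by its order n and a
  symmetric irreflexive adjacency relation (only its restriction to {0..<n} matters).\<close>
type_synonym graph = "nat \<times> (nat \<Rightarrow> nat \<Rightarrow> bool)"

definition order_g :: "graph \<Rightarrow> nat" where "order_g G = fst G"
definition adj :: "graph \<Rightarrow> nat \<Rightarrow> nat \<Rightarrow> bool" where
  "adj G i j = (i < fst G \<and> j < fst G \<and> i \<noteq> j \<and> snd G i j \<and> snd G j i)"

definition complete_graph :: "nat \<Rightarrow> graph" where
  "complete_graph n = (n, \<lambda>i j. i \<noteq> j)"

definition empty_graph :: "nat \<Rightarrow> graph" where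
  "empty_graph m = (m, \<lambda>i j. False)"

definition gunion :: "graph \<Rightarrow> graph \<Rightarrow> graph" where
  "gunion G1 G2 = (order_g G1 + order_g G2,
     \<lambda>i j. (i < order_g G1 \<and> j < order_g G1 \<and> adj G1 i j) \<or>
           (order_g G1 \<le> i \<and> order_g G1 \<le> j \<and> adj G2 (i - order_g G1) (j - order_g G1)))"

definition gjoin :: "graph \<Rightarrow> graph \<Rightarrow> graph" where
  "gjoin G1 G2 = (order_g G1 + order_g G2,
     \<lambda>i j. snd (gunion G1 G2) i j \<or>
           (i < order_g G1 \<and> order_g G1 \<le> j \<and> j < order_g G1 + order_g G2) \<or>
           (j < order_g G1 \<and> order_g G1 \<le> i \<and> i < order_g G1 + order_g G2))"

definition degree :: "graph \<Rightarrow> nat \<Rightarrow> nat" where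
  "degree G i = card {j. j < order_g G \<and> adj G i j}"

definition num_edges :: "graph \<Rightarrow> nat" where
  "num_edges G = card {(i, j). i < j \<and> j < order_g G \<and> adj G i j}"

definition laplacian :: "graph \<Rightarrow> real mat" where
  "laplacian G = mat (order_g G) (order_g G)
     (\<lambda>(i, j). if i = j then real (degree G i) else if adj G i j then -1 else 0)"

text \<open>Laplacian spectrum: multiset of roots of the characteristic polynomial
  (the Laplacian is real symmetric, so all n eigenvalues are real).\<close>
definition lap_spectrum :: "graph \<Rightarrow> real multiset" where
  "lap_spectrum G = proots (char_poly (laplacian G))"

definition avg_degree :: "graph \<Rightarrow> real" where
  "avg_degree G = 2 * real (num_edges G) / real (order_g G)"

definition lap_energy :: "graph \<Rightarrow> real" where
  "lap_energy G = (\<Sum>\<^sub># (image_mset (\<lambda>\<mu>. \<bar>\<mu> - avg_degree G\<bar>) (lap_spectrum G)))"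

definition L_borderenergetic :: "graph \<Rightarrow> bool" where
  "L_borderenergetic G = (lap_energy G = lap_energy (complete_graph (order_g G)))"

definition G_r :: "nat \<Rightarrow> graph" where
  "G_r r = (let H = gunion (empty_graph r) (gjoin (empty_graph 1) (empty_graph (r + 1)))
            in gjoin H H)"

end

theory Submission
  imports Defs "Jordan_Normal_Form.Schur_Decomposition"
begin

text \<open>Both Laplacians are reduced with twins. If a cell of vertices is an independent set
  (or a clique) whose members have the same neighbours outside it, then \<open>e\<^sub>u - e\<^sub>v\<close> is an
  eigenvector for any two members \<open>u, v\<close>, with eigenvalue their common degree (plus one for a
  clique). Changing to a basis of cell representatives and such differences makes the matrix
  block triangular, so its characteristic polynomial is that of the quotient matrix of the
  cells times the twin factors. \<open>K\<^sub>n\<close> is one clique, giving the spectrum \<open>0, n\<^sup>n\<^sup>-\<^sup>1\<close>.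
  \<open>G\<^sub>r\<close> has six independent cells; its \<open>6 \<times> 6\<close> quotient has eigenvalues \<open>0, 2r+2, 2r+2,
  3r+4, 3r+4, 4r+4\<close>, and the twin eigenvalues are \<open>2r+2\<close> (\<open>2r-2\<close> times) and \<open>2r+3\<close>
  (\<open>2r\<close> times). As the average degree is \<open>2r+3\<close>, \<open>LE(G\<^sub>r) = (6r+8) + (2r-2) = 8r+6\<close>,
  while \<open>2r+2\<close> is not a Laplacian eigenvalue of \<open>K\<^sub>4\<^sub>r\<^sub>+\<^sub>4\<close>.\<close>

section \<open>Twin reduction of characteristic polynomials\<close>

lemma index_mult_mat_sum:
  assumes "A \<in> carrier_mat p n" "B \<in> carrier_mat n q" "i < p" "j < q"
  shows "(A * B) $$ (i, j) = (\<Sum>m<n. A $$ (i, m) * B $$ (m, j))"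
  using assms by (simp add: scalar_prod_def lessThan_atLeast0)

lemma proots_prod_linear: "proots (\<Prod>a\<leftarrow>es. [:- a, 1:]) = mset (es :: 'a :: idom list)"
proof (induction es)
  case (Cons a es)
  have "(\<Prod>a\<leftarrow>es. [:- a, 1:]) \<noteq> 0" by (auto simp: prod_list_zero_iff)
  then have "proots (\<Prod>a\<leftarrow>a # es. [:- a, 1:]) = proots [:- a, 1:] + proots (\<Prod>a\<leftarrow>es. [:- a, 1:])"
    by (simp only: list.map prod_list.Cons, intro proots_mult) auto
  then show ?case using Cons by simp
qed simp

text \<open>Cells are runs of consecutive indices and \<open>start i\<close> is the first index of the cell
  of \<open>i\<close>; the enumeration \<open>\<sigma>\<close> lists the \<open>k\<close> cell starts before all other indices.\<close>

locale cell_order =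
  fixes n k :: nat and start \<sigma> :: "nat \<Rightarrow> nat"
  assumes k_le_n: "k \<le> n"
    and start_le: "\<And>i. i < n \<Longrightarrow> start i \<le> i"
    and start_pred: "\<And>i. i < n \<Longrightarrow> start i \<noteq> i \<Longrightarrow> start (i - 1) = start i"
    and \<sigma>_less: "\<And>j. j < n \<Longrightarrow> \<sigma> j < n"
    and inj_\<sigma>: "inj_on \<sigma> {..<n}"
    and start_\<sigma>: "\<And>j. j < k \<Longrightarrow> start (\<sigma> j) = \<sigma> j"
    and start_\<sigma>_neq: "\<And>j. k \<le> j \<Longrightarrow> j < n \<Longrightarrow> start (\<sigma> j) \<noteq> \<sigma> j"
begin

definition twin_basis :: "'a :: ring_1 mat" where
  "twin_basis = mat n n (\<lambda>(m, j). (if m = \<sigma> j then 1 else 0)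
     - (if start (\<sigma> j) \<noteq> \<sigma> j \<and> m = \<sigma> j - 1 then 1 else 0))"

definition twin_basis_inv :: "'a :: ring_1 mat" where
  "twin_basis_inv = mat n n (\<lambda>(i, m). if start m = start (\<sigma> i) \<and> \<sigma> i \<le> m then 1 else 0)"

definition quotient_mat :: "'a :: ring_1 mat \<Rightarrow> 'a mat" where
  "quotient_mat A = mat k k (\<lambda>(i, j). \<Sum>m<n. if start m = \<sigma> i then A $$ (m, \<sigma> j) else 0)"

lemma twin_basis_carrier: "twin_basis \<in> carrier_mat n n"
  and twin_basis_inv_carrier: "twin_basis_inv \<in> carrier_mat n n"
  unfolding twin_basis_def twin_basis_inv_def by auto

lemma twin_basis_index:
  "m < n \<Longrightarrow> j < n \<Longrightarrow> twin_basis $$ (m, j) = (if m = \<sigma> j then 1 else 0)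
     - (if start (\<sigma> j) \<noteq> \<sigma> j \<and> m = \<sigma> j - 1 then 1 else 0)"
  unfolding twin_basis_def by simp

lemma twin_basis_inv_index:
  "i < n \<Longrightarrow> m < n \<Longrightarrow>
    twin_basis_inv $$ (i, m) = (if start m = start (\<sigma> i) \<and> \<sigma> i \<le> m then 1 else 0)"
  unfolding twin_basis_inv_def by simp

lemma mult_twin_basis_index:
  fixes B :: "'a :: ring_1 mat"
  assumes B: "B \<in> carrier_mat p n" and i: "i < p" and j: "j < n"
  shows "(B * twin_basis) $$ (i, j)
    = B $$ (i, \<sigma> j) - (if start (\<sigma> j) \<noteq> \<sigma> j then B $$ (i, \<sigma> j - 1) else 0)"
proof -
  have lt: "\<sigma> j < n" "start (\<sigma> j) \<noteq> \<sigma> j \<Longrightarrow> \<sigma> j - 1 < n"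
    using \<sigma>_less[OF j] by auto
  have "(B * twin_basis) $$ (i, j) = (\<Sum>m<n. B $$ (i, m) * twin_basis $$ (m, j))"
    by (rule index_mult_mat_sum[OF B twin_basis_carrier i j])
  also have "\<dots> = (\<Sum>m<n. if m = \<sigma> j then B $$ (i, m) else 0)
      - (\<Sum>m<n. if start (\<sigma> j) \<noteq> \<sigma> j \<and> m = \<sigma> j - 1 then B $$ (i, m) else 0)"
    unfolding sum_subtractf[symmetric] using j
    by (intro sum.cong) (auto simp: twin_basis_index right_diff_distrib)
  also have "\<dots> = B $$ (i, \<sigma> j) - (if start (\<sigma> j) \<noteq> \<sigma> j then B $$ (i, \<sigma> j - 1) else 0)"
    using lt by (cases "start (\<sigma> j) \<noteq> \<sigma> j") (simp_all add: sum.delta)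
  finally show ?thesis .
qed

lemma twin_basis_inv_mult: "twin_basis_inv * twin_basis = (1\<^sub>m n :: 'a :: ring_1 mat)"
proof (rule eq_matI)
  fix i j assume "i < dim_row (1\<^sub>m n :: 'a mat)" "j < dim_col (1\<^sub>m n :: 'a mat)"
  then have ij: "i < n" "j < n" by auto
  have le: "start (\<sigma> i) \<le> \<sigma> i" using start_le \<sigma>_less ij by auto
  have \<sigma>_eq: "\<sigma> i = \<sigma> j \<longleftrightarrow> i = j" using inj_\<sigma> ij by (auto dest: inj_onD)
  show "(twin_basis_inv * twin_basis) $$ (i, j) = (1\<^sub>m n :: 'a mat) $$ (i, j)"
  proof (cases "start (\<sigma> j) = \<sigma> j")
    case True
    have "start (\<sigma> j) = start (\<sigma> i) \<and> \<sigma> i \<le> \<sigma> j \<longleftrightarrow> i = j"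
      using True le \<sigma>_eq by auto
    then show ?thesis
      using True ij \<sigma>_less[OF ij(2)]
      by (simp add: mult_twin_basis_index[OF twin_basis_inv_carrier] twin_basis_inv_index)
  next
    case False
    have lt: "\<sigma> j < n" using \<sigma>_less ij by blast
    then have prev: "start (\<sigma> j - 1) = start (\<sigma> j)" "\<sigma> j - 1 < n"
      using start_pred[OF _ False] by auto
    have pos: "0 < \<sigma> j" using start_le[OF lt] False by linarith
    then have le_iff: "\<sigma> i \<le> \<sigma> j \<longleftrightarrow> \<sigma> i \<le> \<sigma> j - 1 \<or> i = j"
      using \<sigma>_eq by auto
    have "(twin_basis_inv * twin_basis) $$ (i, j)
        = twin_basis_inv $$ (i, \<sigma> j) - (twin_basis_inv $$ (i, \<sigma> j - 1) :: 'a)"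
      using False by (simp add: mult_twin_basis_index[OF twin_basis_inv_carrier ij])
    also have "\<dots> = (if start (\<sigma> j) = start (\<sigma> i) \<and> \<sigma> i \<le> \<sigma> j then 1 else 0)
        - (if start (\<sigma> j) = start (\<sigma> i) \<and> \<sigma> i \<le> \<sigma> j - 1 then 1 else 0)"
      using ij lt prev by (simp add: twin_basis_inv_index)
    also have "\<dots> = (1\<^sub>m n :: 'a mat) $$ (i, j)"
    proof (cases "i = j")
      case True
      then show ?thesis using pos ij by simp
    next
      case False
      then show ?thesis using ij le_iff by simp
    qed
    finally show ?thesis .
  qed
qed (auto simp: twin_basis_def twin_basis_inv_def)

lemma twin_basis_mult_inv: "twin_basis * twin_basis_inv = (1\<^sub>m n :: 'a :: field mat)"
  by (rule mat_mult_left_right_inverse[OF twin_basis_inv_carrier twin_basis_carrier twin_basis_inv_mult])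

lemma similar_twin_basis_conj:
  fixes A :: "'a :: field mat"
  assumes A: "A \<in> carrier_mat n n"
  shows "similar_mat A (twin_basis_inv * A * twin_basis)"
proof -
  let ?P = "twin_basis :: 'a mat" and ?Q = "twin_basis_inv :: 'a mat"
  have P: "?P \<in> carrier_mat n n" and Q: "?Q \<in> carrier_mat n n"
    by (rule twin_basis_carrier twin_basis_inv_carrier)+
  have "?P * (?Q * A * ?P) * ?Q = (?P * ?Q) * (A * ?P) * ?Q"
    by (simp add: assoc_mult_mat[OF Q A P] assoc_mult_mat[OF P Q mult_carrier_mat[OF A P]])
  also have "\<dots> = A * (?P * ?Q)"
    using A P Q by (simp add: twin_basis_mult_inv assoc_mult_mat[OF A P Q])
  finally have "A = ?P * (?Q * A * ?P) * ?Q"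
    using A by (simp add: twin_basis_mult_inv)
  then show ?thesis
    using A P Q by (intro similar_matI[OF _ twin_basis_mult_inv twin_basis_inv_mult]) auto
qed

text \<open>Columns of the twin basis for indices \<open>j \<ge> k\<close> are the differences
  \<open>e\<^sub>b - e\<^sub>b\<^sub>-\<^sub>1\<close> of consecutive members of a cell; the hypothesis \<open>twin\<close> says
  that these are eigenvectors of \<open>A\<close>.\<close>

context
  fixes A :: "'a :: conjugatable_ordered_field mat" and lam :: "nat \<Rightarrow> 'a"
  assumes A: "A \<in> carrier_mat n n"
    and twin: "\<And>b m. b < n \<Longrightarrow> start b \<noteq> b \<Longrightarrow> m < n \<Longrightarrow>
      A $$ (m, b) - A $$ (m, b - 1) = lam b * ((if m = b then 1 else 0) - (if m = b - 1 then 1 else 0))"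
begin

lemma twin_basis_conj_quotient:
  assumes "i < k" "j < k"
  shows "(twin_basis_inv * A * twin_basis) $$ (i, j) = quotient_mat A $$ (i, j)"
proof -
  have ij: "i < n" "j < n" using assms k_le_n by auto
  have "(A * twin_basis) $$ (m, j) = A $$ (m, \<sigma> j)" if "m < n" for m
    using that ij start_\<sigma>[OF assms(2)] by (simp add: mult_twin_basis_index[OF A])
  moreover have "twin_basis_inv * A * twin_basis = twin_basis_inv * (A * twin_basis)"
    by (rule assoc_mult_mat[OF twin_basis_inv_carrier A twin_basis_carrier])
  ultimately have "(twin_basis_inv * A * twin_basis) $$ (i, j)
      = (\<Sum>m<n. twin_basis_inv $$ (i, m) * A $$ (m, \<sigma> j))"
    using index_mult_mat_sum[OF twin_basis_inv_carrier mult_carrier_mat[OF A twin_basis_carrier] ij]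
    by simp
  also have "\<dots> = (\<Sum>m<n. if start m = \<sigma> i then A $$ (m, \<sigma> j) else 0)"
  proof (rule sum.cong)
    fix m assume "m \<in> {..<n}"
    then have "start m \<le> m" "m < n" using start_le by auto
    then show "twin_basis_inv $$ (i, m) * A $$ (m, \<sigma> j) = (if start m = \<sigma> i then A $$ (m, \<sigma> j) else 0)"
      using ij start_\<sigma>[OF assms(1)] by (auto simp: twin_basis_inv_index)
  qed simp
  finally show ?thesis using assms by (simp add: quotient_mat_def)
qed

lemma twin_basis_conj_twin_column:
  assumes "i < n" "k \<le> j" "j < n"
  shows "(twin_basis_inv * A * twin_basis) $$ (i, j) = (if i = j then lam (\<sigma> j) else 0)"
proof -
  have b: "\<sigma> j < n" "start (\<sigma> j) \<noteq> \<sigma> j" using assms \<sigma>_less start_\<sigma>_neq by auto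
  have "(A * twin_basis) $$ (m, j) = lam (\<sigma> j) * twin_basis $$ (m, j)" if "m < n" for m
    using that assms b twin[OF b that] by (simp add: mult_twin_basis_index[OF A] twin_basis_index)
  then have "(twin_basis_inv * (A * twin_basis)) $$ (i, j)
      = (\<Sum>m<n. twin_basis_inv $$ (i, m) * (lam (\<sigma> j) * twin_basis $$ (m, j)))"
    using assms
    by (simp add: index_mult_mat_sum[OF twin_basis_inv_carrier mult_carrier_mat[OF A twin_basis_carrier]])
  also have "\<dots> = lam (\<sigma> j) * (twin_basis_inv * twin_basis) $$ (i, j)"
    using assms by (simp add: index_mult_mat_sum[OF twin_basis_inv_carrier twin_basis_carrier]
        sum_distrib_left mult.left_commute)
  finally have "(twin_basis_inv * (A * twin_basis)) $$ (i, j)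
      = lam (\<sigma> j) * (twin_basis_inv * twin_basis) $$ (i, j)" .
  then show ?thesis
    using assms by (simp add: assoc_mult_mat[OF twin_basis_inv_carrier A twin_basis_carrier]
        twin_basis_inv_mult)
qed

lemma twin_basis_conj_block:
  "twin_basis_inv * A * twin_basis = four_block_mat (quotient_mat A) (0\<^sub>m k (n - k))
     (mat (n - k) k (\<lambda>(i, j). (twin_basis_inv * A * twin_basis) $$ (i + k, j)))
     (mat_diag (n - k) (\<lambda>i. lam (\<sigma> (i + k))))"
  (is "?T = ?M")
proof (rule eq_matI)
  fix i j assume "i < dim_row ?M" "j < dim_col ?M"
  then have ij: "i < n" "j < n" using k_le_n by (auto simp: quotient_mat_def mat_diag_def)
  show "?T $$ (i, j) = ?M $$ (i, j)"
  proof (cases "j < k")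
    case True
    then show ?thesis
      using ij k_le_n twin_basis_conj_quotient[of i j] by (auto simp: quotient_mat_def mat_diag_def)
  next
    case False
    then show ?thesis
      using ij k_le_n twin_basis_conj_twin_column[OF ij(1) _ ij(2)]
      by (auto simp: quotient_mat_def mat_diag_def)
  qed
qed (use k_le_n A in \<open>auto simp: quotient_mat_def twin_basis_def twin_basis_inv_def mat_diag_def\<close>)

lemma char_poly_twin_reduction:
  assumes split: "\<exists>es. char_poly (quotient_mat A) = (\<Prod>a\<leftarrow>es. [:- a, 1:])"
  shows "char_poly A = char_poly (quotient_mat A) * (\<Prod>j\<leftarrow>[k..<n]. [:- lam (\<sigma> j), 1:])"
proof -
  define D where "D = mat_diag (n - k) (\<lambda>i. lam (\<sigma> (i + k)))"
  have "diag_mat D = map (\<lambda>j. lam (\<sigma> j)) [k..<n]"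
    using k_le_n by (auto simp: D_def mat_diag_def diag_mat_def list_eq_iff_nth_eq add.commute)
  then have char_D: "char_poly D = (\<Prod>j\<leftarrow>[k..<n]. [:- lam (\<sigma> j), 1:])"
    by (subst char_poly_upper_triangular[of _ "n - k"])
      (auto simp: D_def mat_diag_def upper_triangular_def o_def)
  have split_D: "\<exists>es. char_poly D = (\<Prod>a\<leftarrow>es. [:- a, 1:])"
    unfolding char_D by (rule exI[of _ "map (\<lambda>j. lam (\<sigma> j)) [k..<n]"]) (simp add: o_def)
  have "char_poly A = char_poly (twin_basis_inv * A * twin_basis)"
    by (rule char_poly_similar[OF similar_twin_basis_conj[OF A]])
  also have "\<dots> = char_poly (quotient_mat A) * char_poly D"
    by (rule char_poly_0_block'[OF twin_basis_conj_block[folded D_def] split split_D])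
      (auto simp: quotient_mat_def D_def)
  finally show ?thesis unfolding char_D .
qed

end

end

section \<open>Graph operations\<close>

lemma adj_sym: "adj G i j = adj G j i"
  unfolding adj_def by auto

lemma adj_imp_less: "adj G i j \<Longrightarrow> i < order_g G \<and> j < order_g G \<and> i \<noteq> j"
  unfolding adj_def order_g_def by auto

lemma sum_degree_eq_twice_num_edges: "(\<Sum>i<order_g G. degree G i) = 2 * num_edges G"
proof -
  let ?N = "order_g G"
  define S where "S = {(i, j). i < j \<and> j < ?N \<and> adj G i j}"
  have "finite S" unfolding S_def
    by (rule finite_subset[of _ "{..<?N} \<times> {..<?N}"]) auto
  have swap: "{(i, j). j < i \<and> i < ?N \<and> adj G i j} = prod.swap ` S"
    unfolding S_def by (auto simp: image_def adj_sym)
  have "(\<Sum>i<?N. degree G i) = card (SIGMA i:{..<?N}. {j. j < ?N \<and> adj G i j})"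
    unfolding degree_def by (rule card_SigmaI[symmetric]) auto
  also have "(SIGMA i:{..<?N}. {j. j < ?N \<and> adj G i j}) = S \<union> prod.swap ` S"
    unfolding swap[symmetric] S_def by (auto simp: adj_def order_g_def)
  also have "card (S \<union> prod.swap ` S) = card S + card (prod.swap ` S)"
    using \<open>finite S\<close> by (intro card_Un_disjoint) (auto simp: S_def)
  also have "card (prod.swap ` S) = card S"
    by (rule card_image) (auto simp: inj_on_def)
  finally show ?thesis unfolding num_edges_def S_def by simp
qed

lemma avg_degree_eq_mean_degree:
  "avg_degree G = (\<Sum>i<order_g G. real (degree G i)) / real (order_g G)"
  unfolding avg_degree_def
  using arg_cong[OF sum_degree_eq_twice_num_edges[of G], of real] by simp

lemma order_empty_graph [simp]: "order_g (empty_graph m) = m"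
  unfolding order_g_def empty_graph_def by simp

lemma order_gunion [simp]: "order_g (gunion G1 G2) = order_g G1 + order_g G2"
  unfolding gunion_def order_g_def by simp

lemma order_gjoin [simp]: "order_g (gjoin G1 G2) = order_g G1 + order_g G2"
  unfolding gjoin_def order_g_def by simp

lemma adj_empty_graph [simp]: "\<not> adj (empty_graph m) i j"
  unfolding adj_def empty_graph_def by simp

lemma adj_gunion: "adj (gunion G1 G2) i j \<longleftrightarrow> i \<noteq> j \<and>
   (i < order_g G1 \<and> j < order_g G1 \<and> adj G1 i j \<or>
    order_g G1 \<le> i \<and> order_g G1 \<le> j \<and> adj G2 (i - order_g G1) (j - order_g G1))"
  using adj_imp_less[of G1 i j] adj_imp_less[of G2 "i - order_g G1" "j - order_g G1"]
    adj_sym[of G1 i j] adj_sym[of G2 "i - order_g G1" "j - order_g G1"]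
  unfolding adj_def[of "gunion G1 G2"] by (auto simp: gunion_def order_g_def)

lemma adj_gjoin: "adj (gjoin G1 G2) i j \<longleftrightarrow> i \<noteq> j \<and>
   i < order_g G1 + order_g G2 \<and> j < order_g G1 + order_g G2 \<and>
   (i < order_g G1 \<and> j < order_g G1 \<and> adj G1 i j \<or>
    order_g G1 \<le> i \<and> order_g G1 \<le> j \<and> adj G2 (i - order_g G1) (j - order_g G1) \<or>
    i < order_g G1 \<and> order_g G1 \<le> j \<or> j < order_g G1 \<and> order_g G1 \<le> i)"
  using adj_imp_less[of G1 i j] adj_imp_less[of G2 "i - order_g G1" "j - order_g G1"]
    adj_sym[of G1 i j] adj_sym[of G2 "i - order_g G1" "j - order_g G1"]
  unfolding adj_def[of "gjoin G1 G2"] by (auto simp: gjoin_def gunion_def order_g_def)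

section \<open>The complete graph\<close>

lemma order_complete_graph [simp]: "order_g (complete_graph n) = n"
  unfolding order_g_def complete_graph_def by simp

lemma adj_complete_graph: "adj (complete_graph n) i j \<longleftrightarrow> i < n \<and> j < n \<and> i \<noteq> j"
  unfolding adj_def complete_graph_def by auto

lemma degree_complete_graph: "i < n \<Longrightarrow> degree (complete_graph n) i = n - 1"
proof -
  assume i: "i < n"
  have "{j. j < n \<and> adj (complete_graph n) i j} = {..<n} - {i}"
    by (auto simp: adj_complete_graph i)
  then show ?thesis unfolding degree_def using i by simp
qed

lemma laplacian_complete_graph_index:
  "i < n \<Longrightarrow> j < n \<Longrightarrow> laplacian (complete_graph n) $$ (i, j) = (if i = j then real n - 1 else -1)"
  unfolding laplacian_def using degree_complete_graph[of i n] by (auto simp: adj_complete_graph)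

text \<open>All of \<open>K\<^sub>n\<close> is a single cell of adjacent twins.\<close>

lemma char_poly_laplacian_complete_graph:
  assumes "n \<ge> 1"
  shows "char_poly (laplacian (complete_graph n)) = (\<Prod>a\<leftarrow>0 # replicate (n - 1) (real n). [:- a, 1:])"
proof -
  let ?L = "laplacian (complete_graph n)"
  interpret K: cell_order n 1 "\<lambda>_. 0" "\<lambda>i. i"
    using assms by unfold_locales (auto simp: inj_on_def)
  have "(\<Sum>m<n. ?L $$ (m, 0)) = (\<Sum>m<n. (if m = 0 then real n else 0) - 1)"
    using assms by (intro sum.cong) (auto simp: laplacian_complete_graph_index)
  also have "\<dots> = 0" using assms by (simp add: sum_subtractf sum.delta)
  finally have "K.quotient_mat ?L = 0\<^sub>m 1 1"
    unfolding K.quotient_mat_def by (intro eq_matI) auto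
  then have quot: "char_poly (K.quotient_mat ?L) = (\<Prod>a\<leftarrow>[0]. [:- a, 1:])"
    by (simp add: char_poly_upper_triangular[of _ 1] upper_triangular_def diag_mat_def)
  then have split: "\<exists>es. char_poly (K.quotient_mat ?L) = (\<Prod>a\<leftarrow>es. [:- a, 1:])"
    by (rule exI)
  have L: "?L \<in> carrier_mat n n" by (simp add: laplacian_def)
  have twin: "?L $$ (m, b) - ?L $$ (m, b - 1)
      = real n * ((if m = b then 1 else 0) - (if m = b - 1 then 1 else 0))"
    if "b < n" "0 \<noteq> b" "m < n" for b m
    using that by (simp add: laplacian_complete_graph_index)
  have "char_poly ?L = char_poly (K.quotient_mat ?L) * (\<Prod>j\<leftarrow>[1..<n]. [:- real n, 1:])"
    by (rule K.char_poly_twin_reduction[OF L twin split])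
  also have "map (\<lambda>j. [:- real n, 1:]) [1..<n] = replicate (n - 1) [:- real n, 1:]"
    by (simp add: map_replicate_const)
  finally show ?thesis using quot by (simp add: map_replicate)
qed

lemma lap_spectrum_complete_graph:
  "n \<ge> 1 \<Longrightarrow> lap_spectrum (complete_graph n) = mset (0 # replicate (n - 1) (real n))"
  unfolding lap_spectrum_def by (simp only: char_poly_laplacian_complete_graph proots_prod_linear)

lemma avg_degree_complete_graph: "n \<ge> 1 \<Longrightarrow> avg_degree (complete_graph n) = real n - 1"
  unfolding avg_degree_eq_mean_degree by (simp add: degree_complete_graph of_nat_diff)

lemma lap_energy_complete_graph: "n \<ge> 1 \<Longrightarrow> lap_energy (complete_graph n) = 2 * real n - 2"
  unfolding lap_energy_def
  by (simp add: lap_spectrum_complete_graph avg_degree_complete_graph of_nat_diff algebra_simps)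

section \<open>The graph \<open>G\<^sub>r\<close>\<close>

text \<open>\<open>G\<^sub>r\<close> is the join of two copies of \<open>rK\<^sub>1 \<union> K\<^sub>1\<^sub>,\<^sub>r\<^sub>+\<^sub>1\<close>, whose vertices are
  \<open>r\<close> isolated vertices \<open>0..<r\<close>, the centre \<open>r\<close> and the leaves \<open>r+1..<2r+2\<close>.\<close>

definition half_graph :: "nat \<Rightarrow> graph" where
  "half_graph r = gunion (empty_graph r) (gjoin (empty_graph 1) (empty_graph (r + 1)))"

lemma G_r_eq_gjoin: "G_r r = gjoin (half_graph r) (half_graph r)"
  unfolding G_r_def half_graph_def Let_def ..

lemma order_half_graph [simp]: "order_g (half_graph r) = 2 * r + 2"
  unfolding half_graph_def by simp

lemma order_G_r [simp]: "order_g (G_r r) = 4 * r + 4"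
  unfolding G_r_eq_gjoin by simp

lemma adj_half_graph:
  "adj (half_graph r) i j \<longleftrightarrow> i < 2 * r + 2 \<and> j < 2 * r + 2 \<and> (i = r \<and> r < j \<or> j = r \<and> r < i)"
  unfolding half_graph_def adj_gjoin adj_gunion by auto

text \<open>The six cells of twins: isolated vertices, centre and leaves of each half.\<close>

definition cell :: "nat \<Rightarrow> nat \<Rightarrow> nat" where
  "cell r i = (if i < r then 0 else if i = r then 1 else if i < 2*r+2 then 2 else if i < 3*r+2 then 3
     else if i = 3*r+2 then 4 else 5)"

definition cell_adj :: "nat \<Rightarrow> nat \<Rightarrow> bool" where
  "cell_adj c d \<longleftrightarrow> (c < 3) \<noteq> (d < 3) \<or> c = 1 \<and> d = 2 \<or> c = 2 \<and> d = 1 \<or> c = 4 \<and> d = 5 \<or> c = 5 \<and> d = 4"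

definition cell_size :: "nat \<Rightarrow> nat \<Rightarrow> nat" where
  "cell_size r c = (if c = 0 \<or> c = 3 then r else if c = 1 \<or> c = 4 then 1 else r + 1)"

definition cell_degree :: "nat \<Rightarrow> nat \<Rightarrow> nat" where
  "cell_degree r c = (if c = 0 \<or> c = 3 then 2*r+2 else if c = 1 \<or> c = 4 then 3*r+3 else 2*r+3)"

lemma cell_cases:
  fixes i r :: nat
  obtains "i < r" "cell r i = 0" | "i = r" "cell r i = 1" | "r < i" "i < 2*r+2" "cell r i = 2"
    | "2*r+2 \<le> i" "i < 3*r+2" "cell r i = 3" | "i = 3*r+2" "cell r i = 4" | "3*r+2 < i" "cell r i = 5"
  unfolding cell_def by (cases "i < r"; cases "i = r"; cases "i < 2*r+2"; cases "i < 3*r+2"; cases "i = 3*r+2") auto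

lemma cell_adj_irrefl: "\<not> cell_adj c c"
  unfolding cell_adj_def by auto

lemma adj_G_r:
  "adj (G_r r) i j \<longleftrightarrow> i < 4*r+4 \<and> j < 4*r+4 \<and> i \<noteq> j \<and> cell_adj (cell r i) (cell r j)"
  unfolding G_r_eq_gjoin adj_gjoin adj_half_graph order_half_graph
  by (cases rule: cell_cases[of i r]; cases rule: cell_cases[of j r]; simp add: cell_adj_def; arith)

lemma less_6_cases: "(c :: nat) < 6 \<longleftrightarrow> c = 0 \<or> c = 1 \<or> c = 2 \<or> c = 3 \<or> c = 4 \<or> c = 5"
  by auto

lemma card_cell: "c < 6 \<Longrightarrow> card {m. m < 4*r+4 \<and> cell r m = c} = cell_size r c"
proof (unfold less_6_cases, elim disjE)
  assume "c = 0"
  then have "{m. m < 4*r+4 \<and> cell r m = c} = {0..<r}" by (auto simp: cell_def)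
  then show ?thesis using \<open>c = 0\<close> by (simp add: cell_size_def)
next
  assume "c = 1"
  then have "{m. m < 4*r+4 \<and> cell r m = c} = {r}" by (auto simp: cell_def split: if_splits)
  then show ?thesis using \<open>c = 1\<close> by (simp add: cell_size_def)
next
  assume "c = 2"
  then have "{m. m < 4*r+4 \<and> cell r m = c} = {r+1..<2*r+2}" by (auto simp: cell_def split: if_splits)
  then show ?thesis using \<open>c = 2\<close> by (simp add: cell_size_def)
next
  assume "c = 3"
  then have "{m. m < 4*r+4 \<and> cell r m = c} = {2*r+2..<3*r+2}" by (auto simp: cell_def split: if_splits)
  then show ?thesis using \<open>c = 3\<close> by (simp add: cell_size_def)
next
  assume "c = 4"
  then have "{m. m < 4*r+4 \<and> cell r m = c} = {3*r+2}" by (auto simp: cell_def split: if_splits)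
  then show ?thesis using \<open>c = 4\<close> by (simp add: cell_size_def)
next
  assume "c = 5"
  then have "{m. m < 4*r+4 \<and> cell r m = c} = {3*r+3..<4*r+4}" by (auto simp: cell_def split: if_splits)
  then show ?thesis using \<open>c = 5\<close> by (simp add: cell_size_def)
qed

lemma sum_over_cells:
  fixes f :: "nat \<Rightarrow> 'a :: comm_semiring_1"
  shows "(\<Sum>m<4*r+4. f (cell r m)) = (\<Sum>c<6. of_nat (cell_size r c) * f c)"
proof -
  have "(\<Sum>m<4*r+4. f (cell r m)) = (\<Sum>c<6. \<Sum>m\<in>{m \<in> {..<4*r+4}. cell r m = c}. f (cell r m))"
    by (rule sum.group[symmetric]) (auto simp: cell_def)
  also have "\<dots> = (\<Sum>c<6. of_nat (cell_size r c) * f c)"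
  proof (rule sum.cong)
    fix c :: nat assume "c \<in> {..<6}"
    then have "card {m \<in> {..<4*r+4}. cell r m = c} = cell_size r c"
      using card_cell[of c r] by simp
    then show "(\<Sum>m\<in>{m \<in> {..<4*r+4}. cell r m = c}. f (cell r m)) = of_nat (cell_size r c) * f c"
      by simp
  qed simp
  finally show ?thesis .
qed

lemma sum_6:
  fixes f :: "nat \<Rightarrow> 'a :: comm_monoid_add"
  shows "(\<Sum>c<6. f c) = f 0 + f 1 + f 2 + f 3 + f 4 + f 5"
  by (simp add: eval_nat_numeral ac_simps)

lemma degree_G_r: "i < 4*r+4 \<Longrightarrow> degree (G_r r) i = cell_degree r (cell r i)"
proof -
  assume i: "i < 4*r+4"
  have "degree (G_r r) i = card {j. j < 4*r+4 \<and> cell_adj (cell r i) (cell r j)}"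
    unfolding degree_def adj_G_r using i cell_adj_irrefl by (metis order_G_r)
  also have "\<dots> = (\<Sum>j<4*r+4. if cell_adj (cell r i) (cell r j) then 1 else 0)"
    by (simp add: sum.If_cases Collect_conj_eq lessThan_def Int_commute)
  also have "\<dots> = (\<Sum>c<6. cell_size r c * (if cell_adj (cell r i) c then 1 else 0))"
    using sum_over_cells[of "\<lambda>c. if cell_adj (cell r i) c then 1 else 0 :: nat" r] by simp
  also have "\<dots> = cell_degree r (cell r i)"
    by (cases rule: cell_cases[of i r]) (simp_all add: sum_6 cell_adj_def cell_size_def cell_degree_def)
  finally show ?thesis .
qed

lemma laplacian_G_r_index:
  "i < 4*r+4 \<Longrightarrow> j < 4*r+4 \<Longrightarrow> laplacian (G_r r) $$ (i, j) =
    (if i = j then real (cell_degree r (cell r j)) else if cell_adj (cell r i) (cell r j) then -1 else 0)"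
  unfolding laplacian_def by (simp add: degree_G_r adj_G_r)

definition cell_first :: "nat \<Rightarrow> nat \<Rightarrow> nat" where
  "cell_first r c = [0, r, r + 1, 2*r+2, 3*r+2, 3*r+3] ! c"

text \<open>The six cell representatives come first, then the \<open>2r - 2\<close> remaining vertices of
  cells 0 and 3 (degree \<open>2r + 2\<close>), then the \<open>2r\<close> remaining vertices of cells 2 and 5
  (degree \<open>2r + 3\<close>).\<close>

definition vertex_order :: "nat \<Rightarrow> nat \<Rightarrow> nat" where
  "vertex_order r j = (if j < 6 then cell_first r j else if j < r + 5 then j - 5
     else if j < 2*r+4 then j + r - 2 else if j < 3*r+4 then j - r - 2 else j)"

lemma cell_first_simps [simp]:
  "cell_first r 0 = 0" "cell_first r (Suc 0) = r" "cell_first r 2 = r + 1"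
  "cell_first r 3 = 2*r+2" "cell_first r 4 = 3*r+2" "cell_first r 5 = 3*r+3"
  by (simp_all add: cell_first_def)

lemma vertex_order_cases:
  fixes j r :: nat
  obtains "j < 6" "vertex_order r j = cell_first r j"
    | "6 \<le> j" "j < r + 5" "vertex_order r j = j - 5"
    | "r + 5 \<le> j" "j < 2*r+4" "vertex_order r j = j + r - 2"
    | "2*r+4 \<le> j" "j < 3*r+4" "vertex_order r j = j - r - 2"
    | "6 \<le> j" "3*r+4 \<le> j" "vertex_order r j = j"
  unfolding vertex_order_def by (cases "j < 6"; cases "j < r + 5"; cases "j < 2*r+4"; cases "j < 3*r+4") auto

lemma vertex_order_less_6: "j < 6 \<Longrightarrow> vertex_order r j = cell_first r j"
  unfolding vertex_order_def by simp

lemma cell_first_le: "cell_first r (cell r i) \<le> i"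
  by (cases rule: cell_cases[of i r]) simp_all

lemma cell_pred: "cell_first r (cell r i) \<noteq> i \<Longrightarrow> cell r (i - 1) = cell r i"
  by (cases rule: cell_cases[of i r]) (auto simp: cell_def)

lemma cell_cell_first: "r \<ge> 1 \<Longrightarrow> c < 6 \<Longrightarrow> cell r (cell_first r c) = c"
  unfolding less_6_cases by (auto simp: cell_def)

lemma cell_first_eq_iff: "r \<ge> 1 \<Longrightarrow> c < 6 \<Longrightarrow> cell_first r (cell r i) = cell_first r c \<longleftrightarrow> cell r i = c"
proof
  assume r: "r \<ge> 1" and "c < 6" and "cell_first r (cell r i) = cell_first r c"
  then have "cell r (cell_first r (cell r i)) = cell r (cell_first r c)" by simp
  moreover have "cell r i < 6" by (simp add: cell_def)
  ultimately show "cell r i = c" using cell_cell_first[OF r] \<open>c < 6\<close> by simp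
qed simp

lemma vertex_order_less: "r \<ge> 1 \<Longrightarrow> j < 4*r+4 \<Longrightarrow> vertex_order r j < 4*r+4"
  by (cases rule: vertex_order_cases[of j r]) (auto simp: less_6_cases)

lemma inj_on_vertex_order: "r \<ge> 1 \<Longrightarrow> inj_on (vertex_order r) {..<4*r+4}"
proof (rule inj_on_inverseI)
  fix j assume r: "r \<ge> 1" and "j \<in> {..<4*r+4}"
  define pos where "pos b = (if b = 0 then 0 else if b = r then 1 else if b = r+1 then 2
    else if b = 2*r+2 then 3 else if b = 3*r+2 then 4 else if b = 3*r+3 then 5 else if b < r then b + 5
    else if b < 2*r+2 then b + r + 2 else if b < 3*r+2 then b + 2 - r else b)" for b
  show "pos (vertex_order r j) = j"
    using r \<open>j \<in> _\<close> by (cases rule: vertex_order_cases[of j r]) (auto simp: less_6_cases pos_def)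
qed

lemma vertex_order_first: "j < 6 \<Longrightarrow> cell_first r (cell r (vertex_order r j)) = vertex_order r j"
  unfolding less_6_cases by (auto simp: vertex_order_less_6 cell_def)

lemma vertex_order_not_first:
  "r \<ge> 1 \<Longrightarrow> 6 \<le> j \<Longrightarrow> j < 4*r+4 \<Longrightarrow> cell_first r (cell r (vertex_order r j)) \<noteq> vertex_order r j"
  by (cases rule: vertex_order_cases[of j r]) (auto simp: cell_def)

lemma cell_order_G_r:
  assumes r: "r \<ge> 1"
  shows "cell_order (4*r+4) 6 (\<lambda>i. cell_first r (cell r i)) (vertex_order r)"
proof
  show "6 \<le> 4*r+4" using r by linarith
  show "cell_first r (cell r i) \<le> i" for i by (rule cell_first_le)
  show "cell_first r (cell r (i - 1)) = cell_first r (cell r i)" if "cell_first r (cell r i) \<noteq> i" for i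
    using cell_pred[OF that] by (rule arg_cong)
  show "vertex_order r j < 4*r+4" if "j < 4*r+4" for j by (rule vertex_order_less[OF r that])
  show "inj_on (vertex_order r) {..<4*r+4}" by (rule inj_on_vertex_order[OF r])
  show "cell_first r (cell r (vertex_order r j)) = vertex_order r j" if "j < 6" for j
    by (rule vertex_order_first[OF that])
  show "cell_first r (cell r (vertex_order r j)) \<noteq> vertex_order r j" if "6 \<le> j" "j < 4*r+4" for j
    by (rule vertex_order_not_first[OF r that])
qed

lemma cell_degree_vertex_order:
  assumes "r \<ge> 1" "6 \<le> j" "j < 4*r+4"
  shows "cell_degree r (cell r (vertex_order r j)) = (if j < 2*r+4 then 2*r+2 else 2*r+3)"
  using assms by (cases rule: vertex_order_cases[of j r]) (auto simp: cell_def cell_degree_def)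

text \<open>Each cell is an independent set with a common neighbourhood, so consecutive
  members are non-adjacent twins.\<close>

lemma laplacian_G_r_twin:
  assumes first: "cell_first r (cell r b) \<noteq> b" and b: "b < 4*r+4" and m: "m < 4*r+4"
  shows "laplacian (G_r r) $$ (m, b) - laplacian (G_r r) $$ (m, b - 1) =
    real (cell_degree r (cell r b)) * ((if m = b then 1 else 0) - (if m = b - 1 then 1 else 0))"
proof -
  obtain a where a: "b = Suc a" using first cell_first_le[of r b] by (cases b) auto
  have "cell r a = cell r b" using cell_pred[OF first] a by simp
  then show ?thesis
    using b m cell_adj_irrefl[of "cell r b"] unfolding a diff_Suc_1
    by (cases "m = Suc a"; cases "m = a") (simp_all add: laplacian_G_r_index)
qed

definition cell_quotient :: "nat \<Rightarrow> real mat" where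
  "cell_quotient r = mat 6 6 (\<lambda>(i, j).
     (if i = j then real (cell_degree r j) else 0) - (if cell_adj i j then real (cell_size r i) else 0))"

lemma quotient_mat_G_r:
  assumes r: "r \<ge> 1"
  shows "cell_order.quotient_mat (4*r+4) 6 (\<lambda>i. cell_first r (cell r i)) (vertex_order r)
    (laplacian (G_r r)) = cell_quotient r"
proof -
  interpret G: cell_order "4*r+4" 6 "\<lambda>i. cell_first r (cell r i)" "vertex_order r"
    by (rule cell_order_G_r[OF r])
  have "G.quotient_mat (laplacian (G_r r)) $$ (i, j) = cell_quotient r $$ (i, j)"
    if ij: "i < 6" "j < 6" for i j
  proof -
    let ?b = "cell_first r j"
    have "j < 4*r+4" using ij r by linarith
    then have b: "?b < 4*r+4" "cell r ?b = j"
      using vertex_order_less[OF r, of j] cell_cell_first[OF r ij(2)] ij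
      by (auto simp: vertex_order_less_6)
    have "G.quotient_mat (laplacian (G_r r)) $$ (i, j) = (\<Sum>m<4*r+4.
        if cell_first r (cell r m) = cell_first r i then laplacian (G_r r) $$ (m, ?b) else 0)"
      using ij unfolding G.quotient_mat_def vertex_order_less_6[OF ij(2), symmetric]
      by (simp add: vertex_order_less_6)
    also have "\<dots> = (\<Sum>m<4*r+4. if cell r m = i then laplacian (G_r r) $$ (m, ?b) else 0)"
      using ij by (simp add: cell_first_eq_iff[OF r])
    also have "\<dots> = (\<Sum>m<4*r+4. if m = ?b \<and> i = j then real (cell_degree r j) else 0)
        - (\<Sum>m<4*r+4. if cell r m = i then (if cell_adj i j then 1 else 0) else 0)"
      unfolding sum_subtractf[symmetric] using b cell_adj_irrefl[of j]
      by (intro sum.cong) (auto simp: laplacian_G_r_index)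
    also have "\<dots> = (if i = j then real (cell_degree r j) else 0)
        - (if cell_adj i j then real (cell_size r i) else 0)"
      using b ij sum_over_cells[of "\<lambda>c. if c = i then (if cell_adj i j then 1 else 0) else 0 :: real" r]
      by (simp add: if_distrib[of "\<lambda>x. _ * x"] sum.delta cong: if_cong)
    finally show ?thesis using ij by (simp add: cell_quotient_def)
  qed
  then show ?thesis by (intro eq_matI) (auto simp: G.quotient_mat_def cell_quotient_def)
qed

text \<open>\<open>cell_quotient r\<close> commutes with swapping the two halves of \<open>G\<^sub>r\<close>, so it has
  eigenvectors \<open>(x, x)\<close> and \<open>(x, -x)\<close>; the columns of \<open>half_eigvecs\<close> are the vectors \<open>x\<close>, and
  \<open>half_eigvecs_adj r * half_eigvecs r = (r + 2)(2r + 2) \<cdot> 1\<close>.\<close>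

definition half_eigvecs :: "nat \<Rightarrow> nat \<Rightarrow> nat \<Rightarrow> real" where
  "half_eigvecs r a b = (if a = 0 then (if b = 0 then real r else if b = 1 then real r + 2 else 0)
    else if a = 1 then (if b = 0 then 1 else if b = 1 then -1 else 1)
    else (if b = 0 then real r + 1 else if b = 1 then - (real r + 1) else -1))"

definition half_eigvecs_adj :: "nat \<Rightarrow> nat \<Rightarrow> nat \<Rightarrow> real" where
  "half_eigvecs_adj r a b = (if a = 0 then real r + 2
    else if a = 1 then (if b = 0 then real r + 2 else - real r)
    else (if b = 0 then 0 else if b = 1 then (real r + 1) * (2 * real r + 2) else - (2 * real r + 2)))"

definition swap_sign :: "nat \<Rightarrow> nat \<Rightarrow> real" where
  "swap_sign i j = (if 3 \<le> i \<and> 3 \<le> j then -1 else 1)"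

definition quotient_eigvecs :: "nat \<Rightarrow> real mat" where
  "quotient_eigvecs r = mat 6 6 (\<lambda>(i, j). swap_sign i j * half_eigvecs r (i mod 3) (j mod 3))"

definition quotient_eigvecs_inv :: "nat \<Rightarrow> real mat" where
  "quotient_eigvecs_inv r = mat 6 6 (\<lambda>(i, j).
     swap_sign i j * half_eigvecs_adj r (i mod 3) (j mod 3) / (2 * (real r + 2) * (2 * real r + 2)))"

definition quotient_spectrum :: "nat \<Rightarrow> real list" where
  "quotient_spectrum r = [0, 2 * real r + 2, 3 * real r + 4, 4 * real r + 4, 2 * real r + 2, 3 * real r + 4]"

lemma quotient_eigvecs_inv_mult: "quotient_eigvecs_inv r * quotient_eigvecs r = 1\<^sub>m 6"
proof (rule eq_matI)
  fix i j assume "i < dim_row (1\<^sub>m 6 :: real mat)" "j < dim_col (1\<^sub>m 6 :: real mat)"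
  then have ij: "i < 6" "j < 6" by auto
  have "(\<Sum>k<6. swap_sign i k * half_eigvecs_adj r (i mod 3) (k mod 3)
      * (swap_sign k j * half_eigvecs r (k mod 3) (j mod 3)))
      = (if i = j then 2 * (real r + 2) * (2 * real r + 2) else 0)"
    using ij unfolding sum_6 less_6_cases
    by (elim disjE; simp add: swap_sign_def half_eigvecs_def half_eigvecs_adj_def; simp add: algebra_simps)
  moreover have "2 * (real r + 2) * (2 * real r + 2) \<noteq> 0" by (simp add: add_pos_pos)
  moreover have "(quotient_eigvecs_inv r * quotient_eigvecs r) $$ (i, j)
      = (\<Sum>k<6. quotient_eigvecs_inv r $$ (i, k) * quotient_eigvecs r $$ (k, j))"
    using ij by (intro index_mult_mat_sum) (auto simp: quotient_eigvecs_def quotient_eigvecs_inv_def)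
  ultimately show "(quotient_eigvecs_inv r * quotient_eigvecs r) $$ (i, j) = 1\<^sub>m 6 $$ (i, j)"
    using ij by (simp add: quotient_eigvecs_def quotient_eigvecs_inv_def sum_divide_distrib[symmetric])
qed (auto simp: quotient_eigvecs_def quotient_eigvecs_inv_def)

lemma cell_quotient_mult_eigvecs:
  "cell_quotient r * quotient_eigvecs r = quotient_eigvecs r * mat_diag 6 (\<lambda>j. quotient_spectrum r ! j)"
proof (rule eq_matI)
  fix i j assume "i < dim_row (quotient_eigvecs r * mat_diag 6 (\<lambda>j. quotient_spectrum r ! j))"
    "j < dim_col (quotient_eigvecs r * mat_diag 6 (\<lambda>j. quotient_spectrum r ! j))"
  then have ij: "i < 6" "j < 6" by (auto simp: quotient_eigvecs_def mat_diag_def)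
  have "(\<Sum>k<6. cell_quotient r $$ (i, k) * (swap_sign k j * half_eigvecs r (k mod 3) (j mod 3)))
      = swap_sign i j * half_eigvecs r (i mod 3) (j mod 3) * quotient_spectrum r ! j"
    using ij unfolding sum_6 less_6_cases
    by (elim disjE; simp add: cell_quotient_def swap_sign_def half_eigvecs_def cell_degree_def
        cell_size_def cell_adj_def quotient_spectrum_def; simp add: algebra_simps)
  moreover have "(cell_quotient r * quotient_eigvecs r) $$ (i, j)
      = (\<Sum>k<6. cell_quotient r $$ (i, k) * quotient_eigvecs r $$ (k, j))"
    using ij by (intro index_mult_mat_sum) (auto simp: quotient_eigvecs_def cell_quotient_def)
  ultimately show "(cell_quotient r * quotient_eigvecs r) $$ (i, j)
      = (quotient_eigvecs r * mat_diag 6 (\<lambda>j. quotient_spectrum r ! j)) $$ (i, j)"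
    using ij by (simp add: mat_diag_mult_right[of _ 6] quotient_eigvecs_def)
qed (auto simp: quotient_eigvecs_def cell_quotient_def mat_diag_def)

lemma char_poly_cell_quotient: "char_poly (cell_quotient r) = (\<Prod>a\<leftarrow>quotient_spectrum r. [:- a, 1:])"
proof -
  let ?P = "quotient_eigvecs r" and ?Q = "quotient_eigvecs_inv r"
    and ?D = "mat_diag 6 (\<lambda>j. quotient_spectrum r ! j)"
  have c: "cell_quotient r \<in> carrier_mat 6 6" "?P \<in> carrier_mat 6 6" "?Q \<in> carrier_mat 6 6"
    by (auto simp: cell_quotient_def quotient_eigvecs_def quotient_eigvecs_inv_def)
  have PQ: "?P * ?Q = 1\<^sub>m 6" by (rule mat_mult_left_right_inverse[OF c(3) c(2) quotient_eigvecs_inv_mult])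
  have "cell_quotient r = cell_quotient r * ?P * ?Q"
    using c by (simp add: assoc_mult_mat[OF c] PQ)
  also have "\<dots> = ?P * ?D * ?Q" by (simp add: cell_quotient_mult_eigvecs)
  finally have "similar_mat (cell_quotient r) ?D"
    using c PQ quotient_eigvecs_inv_mult by (intro similar_matI[of _ _ ?P ?Q 6]) auto
  then have "char_poly (cell_quotient r) = char_poly ?D" by (rule char_poly_similar)
  also have "\<dots> = (\<Prod>a\<leftarrow>diag_mat ?D. [:- a, 1:])"
    by (rule char_poly_upper_triangular[of _ 6]) (auto simp: mat_diag_def upper_triangular_def)
  also have "diag_mat ?D = quotient_spectrum r"
    by (auto simp: diag_mat_def mat_diag_def quotient_spectrum_def list_eq_iff_nth_eq)
  finally show ?thesis .
qed

lemma twin_eigenvalues_G_r: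
  assumes r: "r \<ge> 1"
  shows "map (\<lambda>j. real (cell_degree r (cell r (vertex_order r j)))) [6..<4*r+4]
    = replicate (2*r-2) (2 * real r + 2) @ replicate (2*r) (2 * real r + 3)"
proof -
  have "[6..<4*r+4] = [6..<2*r+4] @ [2*r+4..<4*r+4]"
    using upt_add_eq_append[of 6 "2*r+4" "2*r"] r by (simp add: algebra_simps)
  moreover have "map (\<lambda>j. real (cell_degree r (cell r (vertex_order r j)))) [6..<2*r+4]
      = replicate (2*r-2) (2 * real r + 2)"
    using r by (intro replicate_eqI) (auto simp: cell_degree_vertex_order)
  moreover have "map (\<lambda>j. real (cell_degree r (cell r (vertex_order r j)))) [2*r+4..<4*r+4]
      = replicate (2*r) (2 * real r + 3)"
    using r by (intro replicate_eqI) (auto simp: cell_degree_vertex_order)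
  ultimately show ?thesis by simp
qed

lemma char_poly_laplacian_G_r:
  assumes r: "r \<ge> 1"
  shows "char_poly (laplacian (G_r r)) = (\<Prod>a\<leftarrow>quotient_spectrum r
    @ replicate (2*r-2) (2 * real r + 2) @ replicate (2*r) (2 * real r + 3). [:- a, 1:])"
proof -
  interpret G: cell_order "4*r+4" 6 "\<lambda>i. cell_first r (cell r i)" "vertex_order r"
    by (rule cell_order_G_r[OF r])
  let ?L = "laplacian (G_r r)" and ?lam = "\<lambda>b. real (cell_degree r (cell r b))"
  have L: "?L \<in> carrier_mat (4*r+4) (4*r+4)" by (simp add: laplacian_def)
  have split: "\<exists>es. char_poly (G.quotient_mat ?L) = (\<Prod>a\<leftarrow>es. [:- a, 1:])"
    unfolding quotient_mat_G_r[OF r] char_poly_cell_quotient by blast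
  have "char_poly ?L = char_poly (G.quotient_mat ?L) * (\<Prod>j\<leftarrow>[6..<4*r+4]. [:- ?lam (vertex_order r j), 1:])"
    by (rule G.char_poly_twin_reduction[OF L laplacian_G_r_twin split])
  also have "(\<Prod>j\<leftarrow>[6..<4*r+4]. [:- ?lam (vertex_order r j), 1:])
      = (\<Prod>a\<leftarrow>map (\<lambda>j. ?lam (vertex_order r j)) [6..<4*r+4]. [:- a, 1:])"
    by (simp add: o_def)
  finally show ?thesis
    unfolding quotient_mat_G_r[OF r] char_poly_cell_quotient twin_eigenvalues_G_r[OF r] by simp
qed

lemma lap_spectrum_G_r:
  "r \<ge> 1 \<Longrightarrow> lap_spectrum (G_r r) = mset (quotient_spectrum r
    @ replicate (2*r-2) (2 * real r + 2) @ replicate (2*r) (2 * real r + 3))"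
  unfolding lap_spectrum_def by (simp only: char_poly_laplacian_G_r proots_prod_linear)

lemma avg_degree_G_r: "avg_degree (G_r r) = 2 * real r + 3"
proof -
  have "(\<Sum>i<4*r+4. real (degree (G_r r) i)) = (\<Sum>i<4*r+4. real (cell_degree r (cell r i)))"
    by (simp add: degree_G_r)
  also have "\<dots> = (4 * real r + 4) * (2 * real r + 3)"
    unfolding sum_over_cells[of "\<lambda>c. real (cell_degree r c)" r] sum_6
    by (simp add: cell_size_def cell_degree_def algebra_simps)
  finally show ?thesis
    unfolding avg_degree_eq_mean_degree by (simp add: add_pos_pos)
qed

lemma lap_energy_G_r: "r \<ge> 1 \<Longrightarrow> lap_energy (G_r r) = 8 * real r + 6"
  unfolding lap_energy_def lap_spectrum_G_r avg_degree_G_r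
  by (simp add: quotient_spectrum_def of_nat_diff algebra_simps)

theorem theorem2:
  fixes r :: nat
  assumes "r \<ge> 1"
  shows "order_g (G_r r) = 4 * r + 4
    \<and> lap_energy (G_r r) = lap_energy (complete_graph (4 * r + 4))
    \<and> lap_energy (complete_graph (4 * r + 4)) = 8 * real r + 6
    \<and> L_borderenergetic (G_r r)
    \<and> lap_spectrum (G_r r) \<noteq> lap_spectrum (complete_graph (4 * r + 4))"
proof -
  have K: "lap_energy (complete_graph (4 * r + 4)) = 8 * real r + 6"
    using lap_energy_complete_graph[of "4 * r + 4"] by simp
  have "2 * real r + 2 \<in># lap_spectrum (G_r r)"
    using assms by (simp add: lap_spectrum_G_r quotient_spectrum_def)
  moreover have "2 * real r + 2 \<notin># lap_spectrum (complete_graph (4 * r + 4))"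
    using lap_spectrum_complete_graph[of "4 * r + 4"] by simp
  ultimately show ?thesis
    using K lap_energy_G_r[OF assms] unfolding L_borderenergetic_def by auto
qed

end
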